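(* Let $d\ge 1$ and suppose there exists a function $f:\{0,1\}^n\to\{0,1\}$ of degree $d$ with block sensitivity $b$. Then there exist $\tau\in\{0,1\}$ and $p\in\mathbb{R}^d$ such that $$\langle p, m_d(1)\rangle = 1,\qquad 0\le \langle p, m_d(k)\rangle \le 1 \ \text{ for each } k\in\{2,\dots,b-1\},\qquad \langle p, m_d(b)\rangle = \tau,$$ where $m_d:\mathbb{R}\to\mathbb{R}^d$ is the moment map $m_d(t)=(t,t^2,\dots,t^d)$ and $\langle\cdot,\cdot\rangle$ is the standard inner product on $\mathbb{R}^d$.
   Context: The degree of $f:\{0,1\}^n\to\{0,1\}$ is the degree of the unique multilinear real polynomial agreeing with $f$ on $\{0,1\}^n$. For $x\in\{0,1\}^n$ and $B\subseteq[n]$, $x^B$ is $x$ with the bits in $B$ flipped. The block sensitivity $\mathrm{bs}(f)$ is the maximum over $x\in\{0,1\}^n$ of the largest number $m$ of pairwise disjoint sets $B_1,\dots,B_m\subseteq[n]$ with $f(x^{B_j})\neq f(x)$ for all $j$. *)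

theory Defs
  imports Main Complex_Main
begin

text \<open>Points of the Boolean cube {0,1}^n are encoded as x :: nat \<Rightarrow> bool with
  x i = True meaning bit i equals 1; only indices i < n are used (coordinates
  indexed by {..<n}). A Boolean function f : {0,1}^n \<rightarrow> {0,1} is encoded as
  f :: (nat \<Rightarrow> bool) \<Rightarrow> bool (True = 1); only its values on the cube matter.\<close>

definition cube :: "nat \<Rightarrow> (nat \<Rightarrow> bool) set" where
  "cube n = {x. \<forall>i. n \<le> i \<longrightarrow> \<not> x i}"

definition flip :: "(nat \<Rightarrow> bool) \<Rightarrow> nat set \<Rightarrow> (nat \<Rightarrow> bool)" where
  "flip x B = (\<lambda>i. if i \<in> B then \<not> x i else x i)"

definition multilin_rep :: "nat \<Rightarrow> ((nat \<Rightarrow> bool) \<Rightarrow> bool) \<Rightarrow> (nat set \<Rightarrow> real) \<Rightarrow> bool" where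
  "multilin_rep n f c \<longleftrightarrow>
     (\<forall>S. c S \<noteq> 0 \<longrightarrow> S \<subseteq> {..<n}) \<and>
     (\<forall>x \<in> cube n. of_bool (f x) =
        (\<Sum>S \<in> Pow {..<n}. c S * (\<Prod>i\<in>S. of_bool (x i))))"

definition has_degree :: "nat \<Rightarrow> ((nat \<Rightarrow> bool) \<Rightarrow> bool) \<Rightarrow> nat \<Rightarrow> bool" where
  "has_degree n f d \<longleftrightarrow>
     (\<exists>c. multilin_rep n f c \<and> (\<forall>S. c S \<noteq> 0 \<longrightarrow> card S \<le> d) \<and>
          (\<exists>S. c S \<noteq> 0 \<and> card S = d))"

definition sens_blocks :: "nat \<Rightarrow> ((nat \<Rightarrow> bool) \<Rightarrow> bool) \<Rightarrow> (nat \<Rightarrow> bool) \<Rightarrow> nat \<Rightarrow> bool" where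
  "sens_blocks n f x m \<longleftrightarrow>
     (\<exists>B :: nat \<Rightarrow> nat set.
        (\<forall>j<m. B j \<subseteq> {..<n} \<and> f (flip x (B j)) \<noteq> f x) \<and>
        (\<forall>j<m. \<forall>k<m. j \<noteq> k \<longrightarrow> B j \<inter> B k = {}))"

definition bs :: "nat \<Rightarrow> ((nat \<Rightarrow> bool) \<Rightarrow> bool) \<Rightarrow> nat" where
  "bs n f = Max {m. \<exists>x \<in> cube n. sens_blocks n f x m}"

text \<open>\<langle>p, m_d(t)\<rangle> with p \<in> \<real>^d encoded as p :: nat \<Rightarrow> real on indices 1..d.\<close>
definition moment_ip :: "nat \<Rightarrow> (nat \<Rightarrow> real) \<Rightarrow> real \<Rightarrow> real" where
  "moment_ip d p t = (\<Sum>i=1..d. p i * t ^ i)"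

end

theory Submission
  imports Defs "HOL-Computational_Algebra.Polynomial"
begin

text \<open>Take a point x and b = bs(f) disjoint sensitive blocks B_0, ..., B_(b-1) at x. The
  restriction g(T) = f(x^(B_T)), where B_T is the union of the blocks indexed by T \<subseteq> [b], is
  a function on {0,1}^b of degree at most d: every variable x_i of f becomes a constant or an
  affine function of the single bit [j \<in> T] of the block containing i. By Minsky--Papert
  symmetrization the average of g over the k-subsets of [b] is P(k) for a real polynomial P
  of degree at most d. Hence P(0) = f(x), P(1) = 1 - f(x) since every block is sensitive,
  P(k) \<in> [0,1] for all k \<le> b, and P(b) \<in> {0,1}. The vector p is the coefficient vector of
  \<plusminus>(P - P(0)), the sign chosen so that its value at 1 is 1.\<close>

definition layer_sum :: "nat \<Rightarrow> nat \<Rightarrow> (nat set \<Rightarrow> real) \<Rightarrow> real" where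
  "layer_sum b k g = (\<Sum>T | T \<subseteq> {..<b} \<and> card T = k. g T)"

definition symmetrization_degree_le :: "nat \<Rightarrow> nat \<Rightarrow> (nat set \<Rightarrow> real) \<Rightarrow> bool" where
  "symmetrization_degree_le b d g \<longleftrightarrow> (\<exists>P. degree P \<le> d \<and>
     (\<forall>k\<le>b. layer_sum b k g = real (b choose k) * poly P (real k)))"

lemma finite_layer: "finite {T. T \<subseteq> {..<b::nat} \<and> card T = k}"
  by (rule finite_subset[of _ "Pow {..<b}"]) auto

lemma layer_sum_0: "layer_sum b 0 g = g {}"
proof -
  have "{T. T \<subseteq> {..<b} \<and> card T = 0} = {{}}"
    using finite_subset[of _ "{..<b}"] by auto
  then show ?thesis unfolding layer_sum_def by simp
qed

lemma layer_sum_1: "layer_sum b 1 g = (\<Sum>j<b. g {j})"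
proof -
  have "{T. T \<subseteq> {..<b} \<and> card T = 1} = (\<lambda>j. {j}) ` {..<b}"
    by (auto simp: card_Suc_eq)
  then show ?thesis unfolding layer_sum_def by (simp add: sum.reindex inj_on_def)
qed

lemma layer_sum_top: "layer_sum b b g = g {..<b}"
proof -
  have "{T. T \<subseteq> {..<b} \<and> card T = b} = {{..<b}}"
    using card_subset_eq[of "{..<b}"] by auto
  then show ?thesis unfolding layer_sum_def by simp
qed

lemma layer_sum_bounds:
  assumes "\<And>T. 0 \<le> g T" "\<And>T. g T \<le> 1"
  shows "0 \<le> layer_sum b k g" "layer_sum b k g \<le> real (b choose k)"
proof -
  show "0 \<le> layer_sum b k g" unfolding layer_sum_def using assms by (simp add: sum_nonneg)
  have "layer_sum b k g \<le> (\<Sum>T | T \<subseteq> {..<b} \<and> card T = k. 1)"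
    unfolding layer_sum_def using assms by (intro sum_mono) auto
  also have "\<dots> = real (b choose k)" using n_subsets[of "{..<b}" k] by simp
  finally show "layer_sum b k g \<le> real (b choose k)" .
qed

lemma symmetrization_degree_le_cong:
  assumes "symmetrization_degree_le b d g" "\<And>T. T \<subseteq> {..<b} \<Longrightarrow> g T = h T"
  shows "symmetrization_degree_le b d h"
proof -
  have "layer_sum b k g = layer_sum b k h" for k
    unfolding layer_sum_def using assms(2) by (intro sum.cong) auto
  then show ?thesis using assms(1) unfolding symmetrization_degree_le_def by metis
qed

lemma symmetrization_degree_le_zero: "symmetrization_degree_le b d (\<lambda>T. 0)"
  unfolding symmetrization_degree_le_def layer_sum_def by (rule exI[of _ 0]) auto

lemma symmetrization_degree_le_add:
  assumes "symmetrization_degree_le b d g" "symmetrization_degree_le b d h"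
  shows "symmetrization_degree_le b d (\<lambda>T. g T + h T)"
proof -
  obtain P Q where "degree P \<le> d" "degree Q \<le> d"
    and "\<forall>k\<le>b. layer_sum b k g = real (b choose k) * poly P (real k)"
    and "\<forall>k\<le>b. layer_sum b k h = real (b choose k) * poly Q (real k)"
    using assms unfolding symmetrization_degree_le_def by blast
  then show ?thesis unfolding symmetrization_degree_le_def
    by (intro exI[of _ "P + Q"])
      (auto simp: degree_add_le layer_sum_def sum.distrib distrib_left)
qed

lemma symmetrization_degree_le_smult:
  assumes "symmetrization_degree_le b d g"
  shows "symmetrization_degree_le b d (\<lambda>T. a * g T)"
proof -
  obtain P where "degree P \<le> d" "\<forall>k\<le>b. layer_sum b k g = real (b choose k) * poly P (real k)"
    using assms unfolding symmetrization_degree_le_def by blast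
  then show ?thesis unfolding symmetrization_degree_le_def
    by (intro exI[of _ "smult a P"]) (auto simp: layer_sum_def simp flip: sum_distrib_left)
qed

lemma symmetrization_degree_le_sum:
  assumes "finite I" "\<And>s. s \<in> I \<Longrightarrow> symmetrization_degree_le b d (h s)"
  shows "symmetrization_degree_le b d (\<lambda>T. \<Sum>s\<in>I. h s T)"
  using assms
proof (induction I rule: finite_induct)
  case empty
  then show ?case using symmetrization_degree_le_zero by simp
next
  case (insert s I)
  then show ?case using symmetrization_degree_le_add[of b d "h s"] by simp
qed

lemma card_supersets_of_card:
  assumes "finite A" "W \<subseteq> A" "card W \<le> k"
  shows "card {T. T \<subseteq> A \<and> card T = k \<and> W \<subseteq> T} = (card A - card W) choose (k - card W)"
proof -
  have fW: "finite W" using assms finite_subset by blast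
  let ?L = "{T'. T' \<subseteq> A - W \<and> card T' = k - card W}"
  have "{T. T \<subseteq> A \<and> card T = k \<and> W \<subseteq> T} = (\<lambda>T'. T' \<union> W) ` ?L"
  proof (intro equalityI subsetI)
    fix T assume T: "T \<in> {T. T \<subseteq> A \<and> card T = k \<and> W \<subseteq> T}"
    then have "card (T - W) = k - card W" "T = (T - W) \<union> W"
      using fW by (auto simp: card_Diff_subset)
    then show "T \<in> (\<lambda>T'. T' \<union> W) ` ?L" using T by blast
  next
    fix T assume "T \<in> (\<lambda>T'. T' \<union> W) ` ?L"
    then obtain T' where T': "T = T' \<union> W" "T' \<subseteq> A - W" "card T' = k - card W" by blast
    then have "card T = card T' + card W"
      using fW assms(1) by (metis card_Un_disjoint Diff_disjoint disjoint_iff finite_Diff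
          finite_subset subset_iff)
    then show "T \<in> {T. T \<subseteq> A \<and> card T = k \<and> W \<subseteq> T}" using T' assms by auto
  qed
  moreover have "inj_on (\<lambda>T'. T' \<union> W) ?L" by (rule inj_onI) blast
  ultimately show ?thesis
    using n_subsets[of "A - W" "k - card W"] assms fW by (simp add: card_image card_Diff_subset)
qed

lemma gbinomial_is_poly: "\<exists>P. degree P \<le> u \<and> (\<forall>t::real. poly P t = t gchoose u)"
proof -
  define Q :: "real poly" where "Q = (\<Prod>i\<in>{0..<u}. [:- of_nat i, 1:])"
  have "degree Q \<le> sum (degree \<circ> (\<lambda>i. [:- of_nat i, 1:] :: real poly)) {0..<u}"
    unfolding Q_def by (rule degree_prod_sum_le) simp
  then have "degree (smult (1 / fact u) Q) \<le> u" by simp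
  moreover have "poly (smult (1 / fact u) Q) t = t gchoose u" for t :: real
    unfolding Q_def gbinomial_prod_rev by (simp add: poly_prod)
  ultimately show ?thesis by blast
qed

text \<open>The core of Minsky--Papert symmetrization: the number of k-subsets of [b] containing
  a fixed u-set W is (b choose k) (k choose u) / (b choose u), a polynomial of degree u in k.\<close>

lemma symmetrization_degree_le_superset_indicator:
  assumes "finite W" "card W \<le> d"
  shows "symmetrization_degree_le b d (\<lambda>T. of_bool (W \<subseteq> T))"
proof (cases "W \<subseteq> {..<b}")
  case False
  show ?thesis
    by (rule symmetrization_degree_le_cong[OF symmetrization_degree_le_zero]) (use False in auto)
next
  case True
  define u where "u = card W"
  have "u \<le> b" unfolding u_def using card_mono[OF finite_lessThan True] by simp
  then have bu: "real (b choose u) > 0" by simp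
  obtain Q where Q: "degree Q \<le> u" "\<And>t::real. poly Q t = t gchoose u"
    using gbinomial_is_poly by blast
  define P where "P = smult (1 / real (b choose u)) Q"
  have PQ: "poly P (real k) = real (k choose u) / real (b choose u)" for k
    unfolding P_def using Q(2) by (simp add: binomial_gbinomial)
  show ?thesis unfolding symmetrization_degree_le_def
  proof (intro exI[of _ P] conjI allI impI)
    show "degree P \<le> d" unfolding P_def using Q assms u_def by simp
    fix k assume kb: "k \<le> b"
    have "{T. T \<subseteq> {..<b} \<and> card T = k} \<inter> {T. W \<subseteq> T} = {T. T \<subseteq> {..<b} \<and> card T = k \<and> W \<subseteq> T}"
      by blast
    then have "layer_sum b k (\<lambda>T. of_bool (W \<subseteq> T)) =
        real (card {T. T \<subseteq> {..<b} \<and> card T = k \<and> W \<subseteq> T})"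
      unfolding layer_sum_def using finite_layer[of b k] by (simp only: sum_of_bool_eq)
    also have "\<dots> = real (b choose k) * poly P (real k)"
    proof (cases "u \<le> k")
      case True
      have "real (b choose k) * real (k choose u) = real (b choose u) * real ((b - u) choose (k - u))"
        using choose_mult[OF True kb] by (metis of_nat_mult)
      then have "real (b choose k) * poly P (real k) = real ((b - u) choose (k - u))"
        unfolding PQ using bu by (metis nonzero_mult_div_cancel_left times_divide_eq_right
            order_less_irrefl)
      then show ?thesis
        using card_supersets_of_card[of "{..<b}" W k] \<open>W \<subseteq> {..<b}\<close> True u_def by simp
    next
      case False
      then have none: "{T. T \<subseteq> {..<b} \<and> card T = k \<and> W \<subseteq> T} = {}"
        using u_def card_mono[of _ W] finite_subset[of _ "{..<b}"] by fastforce
      show ?thesis unfolding none PQ using False by simp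
    qed
    finally show "layer_sum b k (\<lambda>T. of_bool (W \<subseteq> T)) = real (b choose k) * poly P (real k)" .
  qed
qed

lemma prod_of_bool: "finite V \<Longrightarrow> (\<Prod>i\<in>V. of_bool (Q i) :: real) = of_bool (\<forall>i\<in>V. Q i)"
  by (induction V rule: finite_induct) auto

lemma symmetrization_degree_le_prod_affine:
  assumes "finite S" "card S \<le> d"
  shows "symmetrization_degree_le b d (\<lambda>T. \<Prod>i\<in>S. \<beta> i * of_bool (J i \<in> T) + \<alpha> i)"
proof -
  have expand: "(\<Prod>i\<in>S. \<beta> i * of_bool (J i \<in> T) + \<alpha> i) =
      (\<Sum>V\<in>Pow S. ((\<Prod>i\<in>V. \<beta> i) * (\<Prod>i\<in>S - V. \<alpha> i)) * of_bool (J ` V \<subseteq> T))" for T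
    unfolding prod_add[OF assms(1)]
  proof (rule sum.cong[OF refl])
    fix V assume "V \<in> Pow S"
    then have "finite V" using assms(1) finite_subset by blast
    then show "(\<Prod>i\<in>V. \<beta> i * of_bool (J i \<in> T)) * (\<Prod>i\<in>S - V. \<alpha> i) =
        ((\<Prod>i\<in>V. \<beta> i) * (\<Prod>i\<in>S - V. \<alpha> i)) * of_bool (J ` V \<subseteq> T)"
      using prod_of_bool[of V "\<lambda>i. J i \<in> T"] by (simp add: prod.distrib image_subset_iff)
  qed
  have "symmetrization_degree_le b d (\<lambda>T. of_bool (J ` V \<subseteq> T))" if "V \<subseteq> S" for V
  proof (rule symmetrization_degree_le_superset_indicator)
    show "finite (J ` V)" using that assms(1) finite_subset by blast
    have "card (J ` V) \<le> card V" using card_image_le \<open>finite (J ` V)\<close> that assms(1)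
      by (meson finite_subset)
    also have "\<dots> \<le> card S" using that assms(1) card_mono by blast
    finally show "card (J ` V) \<le> d" using assms(2) by simp
  qed
  then show ?thesis unfolding expand
    by (intro symmetrization_degree_le_sum symmetrization_degree_le_smult) (use assms in auto)
qed

lemma Union_disjoint_blocks_mem_iff:
  fixes b :: nat
  assumes dis: "\<forall>j<b. \<forall>k<b. j \<noteq> k \<longrightarrow> B j \<inter> B k = {}"
  obtains J where "\<And>T i. T \<subseteq> {..<b} \<Longrightarrow> i \<in> (\<Union>j\<in>T. B j) \<longleftrightarrow> J i \<in> T"
proof
  define J where "J i = (if \<exists>j<b. i \<in> B j then SOME j. j < b \<and> i \<in> B j else b)" for i
  fix T i assume T: "T \<subseteq> {..<b}"
  show "i \<in> (\<Union>j\<in>T. B j) \<longleftrightarrow> J i \<in> T"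
  proof (cases "\<exists>j<b. i \<in> B j")
    case True
    then have Ji: "J i < b" "i \<in> B (J i)"
      unfolding J_def using someI_ex[of "\<lambda>j. j < b \<and> i \<in> B j"] by auto
    have "j = J i" if "j \<in> T" "i \<in> B j" for j
    proof (rule ccontr)
      assume "j \<noteq> J i"
      then have "B j \<inter> B (J i) = {}" using dis T that(1) Ji(1) by blast
      then show False using that(2) Ji(2) by blast
    qed
    then show ?thesis using Ji(2) by blast
  next
    case False
    then have "J i = b" unfolding J_def by (simp only: if_False)
    moreover have "b \<notin> T" using T by blast
    moreover have "i \<notin> (\<Union>j\<in>T. B j)" using T False by blast
    ultimately show ?thesis by simp
  qed
qed

lemma flip_in_cube: "x \<in> cube n \<Longrightarrow> U \<subseteq> {..<n} \<Longrightarrow> flip x U \<in> cube n"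
  unfolding cube_def flip_def by auto

lemma multilin_rep_eval:
  "multilin_rep n f c \<Longrightarrow> x \<in> cube n \<Longrightarrow>
    of_bool (f x) = (\<Sum>S\<in>Pow {..<n}. c S * (\<Prod>i\<in>S. of_bool (x i)))"
  unfolding multilin_rep_def by blast

lemma symmetrization_degree_le_restriction:
  assumes "has_degree n f d" and x: "x \<in> cube n" and "\<forall>j<b. B j \<subseteq> {..<n}"
    and "\<forall>j<b. \<forall>k<b. j \<noteq> k \<longrightarrow> B j \<inter> B k = {}"
  shows "symmetrization_degree_le b d (\<lambda>T. of_bool (f (flip x (\<Union>j\<in>T. B j))))"
proof -
  obtain c where rep: "multilin_rep n f c" and deg: "\<And>S. c S \<noteq> 0 \<Longrightarrow> card S \<le> d"
    using assms(1) unfolding has_degree_def by blast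
  obtain J where J: "\<And>T i. T \<subseteq> {..<b} \<Longrightarrow> i \<in> (\<Union>j\<in>T. B j) \<longleftrightarrow> J i \<in> T"
    using Union_disjoint_blocks_mem_iff assms(4) by blast
  define \<alpha> :: "nat \<Rightarrow> real" where "\<alpha> i = of_bool (x i)" for i
  define \<beta> :: "nat \<Rightarrow> real" where "\<beta> i = 1 - 2 * of_bool (x i)" for i
  define mono where "mono S T = (\<Prod>i\<in>S. \<beta> i * of_bool (J i \<in> T) + \<alpha> i)" for S T
  have eq: "of_bool (f (flip x (\<Union>j\<in>T. B j))) = (\<Sum>S\<in>Pow {..<n}. c S * mono S T)"
    if T: "T \<subseteq> {..<b}" for T
  proof -
    have "(\<Union>j\<in>T. B j) \<subseteq> {..<n}" using T assms(3) by auto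
    then have "flip x (\<Union>j\<in>T. B j) \<in> cube n" by (rule flip_in_cube[OF x])
    moreover have "of_bool (flip x (\<Union>j\<in>T. B j) i) = \<beta> i * of_bool (J i \<in> T) + \<alpha> i" for i
      unfolding flip_def \<alpha>_def \<beta>_def J[OF T] by (cases "x i"; cases "J i \<in> T") simp_all
    ultimately show ?thesis unfolding mono_def by (simp add: multilin_rep_eval[OF rep])
  qed
  have "symmetrization_degree_le b d (\<lambda>T. \<Sum>S\<in>Pow {..<n}. c S * mono S T)"
  proof (rule symmetrization_degree_le_sum)
    fix S assume "S \<in> Pow {..<n}"
    then have "finite S" using finite_subset by blast
    show "symmetrization_degree_le b d (\<lambda>T. c S * mono S T)"
    proof (cases "c S = 0")
      case True
      then show ?thesis using symmetrization_degree_le_zero by simp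
    next
      case False
      then have "card S \<le> d" by (rule deg)
      then show ?thesis unfolding mono_def using \<open>finite S\<close>
        by (intro symmetrization_degree_le_smult symmetrization_degree_le_prod_affine)
    qed
  qed simp
  then show ?thesis by (rule symmetrization_degree_le_cong) (simp add: eq)
qed

lemma sens_blocks_le:
  assumes "sens_blocks n f x m" shows "m \<le> n"
proof -
  obtain B where B: "\<forall>j<m. B j \<subseteq> {..<n} \<and> f (flip x (B j)) \<noteq> f x"
    "\<forall>j<m. \<forall>k<m. j \<noteq> k \<longrightarrow> B j \<inter> B k = {}"
    using assms unfolding sens_blocks_def by blast
  have nonempty: "B j \<noteq> {}" if "j < m" for j
  proof
    assume "B j = {}"
    then have "flip x (B j) = x" unfolding flip_def by simp
    then show False using B(1) that by auto
  qed
  define h where "h j = (SOME i. i \<in> B j)" for j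
  have h: "h j \<in> B j" if "j < m" for j
    unfolding h_def using nonempty[OF that] by (simp add: some_in_eq)
  have "inj_on h {..<m}"
  proof (rule inj_onI)
    fix j k assume "j \<in> {..<m}" "k \<in> {..<m}" "h j = h k"
    then show "j = k" using h[of j] h[of k] B(2) by auto
  qed
  moreover have "h ` {..<m} \<subseteq> {..<n}" using h B(1) by auto
  ultimately show ?thesis using card_inj_on_le[of h "{..<m}" "{..<n}"] by simp
qed

lemma bs_attained: "\<exists>x \<in> cube n. sens_blocks n f x (bs n f)"
proof -
  let ?M = "{m. \<exists>x \<in> cube n. sens_blocks n f x m}"
  have "finite ?M" by (rule finite_subset[of _ "{..n}"]) (auto dest: sens_blocks_le)
  moreover have "(\<lambda>_. False) \<in> cube n" "sens_blocks n f (\<lambda>_. False) 0"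
    unfolding cube_def sens_blocks_def by simp_all
  ultimately have "Max ?M \<in> ?M" by (intro Max_in) blast+
  then show ?thesis unfolding bs_def by blast
qed

lemma sensitive_restriction_poly:
  assumes "has_degree n f d" "x \<in> cube n" "b \<ge> 1"
    and sens: "\<forall>j<b. B j \<subseteq> {..<n} \<and> f (flip x (B j)) \<noteq> f x"
    and "\<forall>j<b. \<forall>k<b. j \<noteq> k \<longrightarrow> B j \<inter> B k = {}"
  obtains P :: "real poly" where "degree P \<le> d"
    "poly P 0 = of_bool (f x)" "poly P 1 = 1 - of_bool (f x)"
    "\<forall>k\<le>b. 0 \<le> poly P (real k) \<and> poly P (real k) \<le> 1"
    "poly P (real b) = 0 \<or> poly P (real b) = 1"
proof -
  define g where "g T = (of_bool (f (flip x (\<Union>j\<in>T. B j))) :: real)" for T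
  have "symmetrization_degree_le b d g"
    unfolding g_def using assms by (intro symmetrization_degree_le_restriction) auto
  then obtain P where "degree P \<le> d"
    and P: "\<And>k. k \<le> b \<Longrightarrow> poly P (real k) = layer_sum b k g / real (b choose k)"
    unfolding symmetrization_degree_le_def by (auto simp: field_simps)
  moreover have "poly P 0 = of_bool (f x)"
    using P[of 0] by (simp add: layer_sum_0 g_def flip_def)
  moreover have "layer_sum b 1 g = real b * (1 - of_bool (f x))"
    unfolding layer_sum_1 using sens by (simp add: g_def)
  then have "poly P 1 = 1 - of_bool (f x)"
    using P[of 1] \<open>b \<ge> 1\<close> by simp
  moreover have "0 \<le> poly P (real k) \<and> poly P (real k) \<le> 1" if "k \<le> b" for k
    using layer_sum_bounds[of g b k] P[OF that] that by (simp add: g_def divide_le_eq_1)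
  moreover have "poly P (real b) = 0 \<or> poly P (real b) = 1"
    using P[of b] by (simp add: layer_sum_top g_def)
  ultimately show ?thesis using that by blast
qed

lemma moment_ip_poly:
  fixes P :: "real poly"
  assumes "degree P \<le> d"
  shows "moment_ip d (\<lambda>i. s * coeff P i) t = s * (poly P t - poly P 0)"
proof -
  have "poly P t = (\<Sum>i\<le>d. coeff P i * t ^ i)"
    unfolding poly_altdef using assms
    by (intro sum.mono_neutral_left) (auto simp: coeff_eq_0)
  also have "\<dots> = poly P 0 + (\<Sum>i=1..d. coeff P i * t ^ i)"
    by (simp add: poly_0_coeff_0 atMost_atLeast0 sum.atLeast_Suc_atMost)
  finally show ?thesis
    unfolding moment_ip_def by (simp add: mult.assoc flip: sum_distrib_left)
qed

lemma moment_witness_from_poly: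
  fixes P :: "real poly"
  assumes "degree P \<le> d" "\<phi> = 0 \<or> \<phi> = 1" "poly P 0 = \<phi>" "poly P 1 = 1 - \<phi>"
    and "\<forall>k \<in> {2..b-1}. 0 \<le> poly P (real k) \<and> poly P (real k) \<le> 1"
    and "poly P (real b) = 0 \<or> poly P (real b) = 1"
  shows "\<exists>(\<tau>::real) (p::nat \<Rightarrow> real). (\<tau> = 0 \<or> \<tau> = 1) \<and>
           moment_ip d p 1 = 1 \<and>
           (\<forall>k \<in> {2..b-1}. 0 \<le> moment_ip d p (real k) \<and> moment_ip d p (real k) \<le> 1) \<and>
           moment_ip d p (real b) = \<tau>"
proof -
  define p where "p i = (1 - 2 * \<phi>) * coeff P i" for i
  have "moment_ip d p t = (1 - 2 * \<phi>) * (poly P t - \<phi>)" for t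
    unfolding p_def using moment_ip_poly[OF assms(1)] assms(3) by simp
  then show ?thesis using assms(2-6) by (intro exI[of _ "moment_ip d p (real b)"] exI[of _ p]) auto
qed

theorem proposition9:
  fixes n d b :: nat and f :: "(nat \<Rightarrow> bool) \<Rightarrow> bool"
  assumes "d \<ge> 1"
    and "has_degree n f d"
    and "bs n f = b"
  shows "\<exists>(\<tau>::real) (p::nat \<Rightarrow> real). (\<tau> = 0 \<or> \<tau> = 1) \<and>
           moment_ip d p 1 = 1 \<and>
           (\<forall>k \<in> {2..b-1}. 0 \<le> moment_ip d p (real k) \<and> moment_ip d p (real k) \<le> 1) \<and>
           moment_ip d p (real b) = \<tau>"
proof (cases "b = 0")
  case True
  then show ?thesis
    using assms(1) by (intro moment_witness_from_poly[of "[:0, 1:]" d 0]) auto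
next
  case False
  obtain x B where x: "x \<in> cube n" and sens: "\<forall>j<b. B j \<subseteq> {..<n} \<and> f (flip x (B j)) \<noteq> f x"
    and dis: "\<forall>j<b. \<forall>k<b. j \<noteq> k \<longrightarrow> B j \<inter> B k = {}"
    using bs_attained[of n f] assms(3) unfolding sens_blocks_def by blast
  from False have "b \<ge> 1" by simp
  obtain P where "degree P \<le> d" "poly P 0 = of_bool (f x)" "poly P 1 = 1 - of_bool (f x)"
    "\<forall>k\<le>b. 0 \<le> poly P (real k) \<and> poly P (real k) \<le> 1"
    "poly P (real b) = 0 \<or> poly P (real b) = 1"
    using sensitive_restriction_poly[OF assms(2) x \<open>b \<ge> 1\<close> sens dis] by blast
  then show ?thesis by (intro moment_witness_from_poly[of P d "of_bool (f x)"]) auto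
qed

end
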